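(* Let $\ell_1,\dots,\ell_T$ be labels, $v_1,v_2>0$, and indices $i\le k<j$ such that the optimal solutions of the adjacent subproblems $(i,k)$ and $(k+1,j)$ both exist and are constant (hence with values $r_{i,k}$ and $r_{k+1,j}$ respectively). If $r_{i,k}\ge r_{k+1,j}$, then the optimal solution of the pooled subproblem $(i,j)$ exists, is constant, and has value $r_{i,j}$.
   Context: A regular binary proper scoring rule (RBPSR) is a function $C_\rho:\{\theta_1,\theta_2\}\times[0,1]\to[0,\infty]$ given by $C_\rho(\theta_1,q)=\int_q^1\frac{\rho(\eta)}{\eta}\,d\eta$ and $C_\rho(\theta_2,q)=\int_0^q\frac{\rho(\eta)}{1-\eta}\,d\eta$, where $\rho$ is a probability distribution on $[0,1]$ (possibly containing Dirac point masses), and these integrals are finite except that $C_\rho(\theta_1,0)$ and $C_\rho(\theta_2,1)$ may equal $\infty$. Given labels $\ell_1,\dots,\ell_T\in\{\theta_1,\theta_2\}$ and weights $v_1,v_2>0$, write $w(\theta_1)=v_1$, $w(\theta_2)=v_2$. For $1\le i\le j\le T$, a solution of subproblem $(i,j)$ is any $p_{i,j}=(p_i,\dots,p_j)\in[0,1]^{j-i+1}$, feasible if $p_i\le\cdots\le p_j$, with objective $J_{i,j}(p_{i,j})=\sum_{t=i}^j w(\ell_t)C_\rho(\ell_t,p_t)$. The optimal solution of subproblem $(i,j)$ is a feasible solution minimizing $J_{i,j}$ among feasible solutions simultaneously for every RBPSR $C_\rho$; it is constant if $p_i=\cdots=p_j$. For $i\le j$, $r_{i,j}=\frac{v_1m_{i,j}}{v_1m_{i,j}+v_2n_{i,j}}$,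 where $m_{i,j},n_{i,j}$ are the numbers of $\theta_1$- and $\theta_2$-labels among $\ell_i,\dots,\ell_j$. *)

theory Defs
  imports "HOL-Probability.Probability"
begin

datatype label = \<theta>\<^sub>1 | \<theta>\<^sub>2

definition einv :: "real \<Rightarrow> ennreal" where
  "einv x = (if x = 0 then \<infinity> else ennreal (1 / x))"

text \<open>Scoring rule C_rho. Convention for point masses:
  C(theta1,q) integrates over [q,1], C(theta2,q) over [0,q).\<close>
definition C :: "real measure \<Rightarrow> label \<Rightarrow> real \<Rightarrow> ennreal" where
  "C \<rho> l q = (case l of
      \<theta>\<^sub>1 \<Rightarrow> (\<integral>\<^sup>+ \<eta>. einv \<eta> * indicator {q..1} \<eta> \<partial>\<rho>)
    | \<theta>\<^sub>2 \<Rightarrow> (\<integral>\<^sup>+ \<eta>. einv (1 - \<eta>) * indicator {0..<q} \<eta> \<partial>\<rho>))"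

definition RBPSR :: "real measure \<Rightarrow> bool" where
  "RBPSR \<rho> \<longleftrightarrow> prob_space \<rho> \<and> sets \<rho> = sets borel \<and> emeasure \<rho> {0..1} = 1
     \<and> (\<forall>q\<in>{0<..1}. C \<rho> \<theta>\<^sub>1 q < \<infinity>)
     \<and> (\<forall>q\<in>{0..<1}. C \<rho> \<theta>\<^sub>2 q < \<infinity>)"

definition w :: "real \<Rightarrow> real \<Rightarrow> label \<Rightarrow> real" where
  "w v1 v2 l = (case l of \<theta>\<^sub>1 \<Rightarrow> v1 | \<theta>\<^sub>2 \<Rightarrow> v2)"

text \<open>A solution of subproblem (i,j) is p restricted to {i..j}.\<close>
definition feasible :: "nat \<Rightarrow> nat \<Rightarrow> (nat \<Rightarrow> real) \<Rightarrow> bool" where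
  "feasible i j p \<longleftrightarrow> (\<forall>t\<in>{i..j}. 0 \<le> p t \<and> p t \<le> 1)
     \<and> (\<forall>s\<in>{i..j}. \<forall>t\<in>{i..j}. s \<le> t \<longrightarrow> p s \<le> p t)"

definition J :: "real measure \<Rightarrow> (nat \<Rightarrow> label) \<Rightarrow> real \<Rightarrow> real \<Rightarrow> nat \<Rightarrow> nat
                   \<Rightarrow> (nat \<Rightarrow> real) \<Rightarrow> ennreal" where
  "J \<rho> lab v1 v2 i j p = (\<Sum>t=i..j. ennreal (w v1 v2 (lab t)) * C \<rho> (lab t) (p t))"

definition optimal :: "(nat \<Rightarrow> label) \<Rightarrow> real \<Rightarrow> real \<Rightarrow> nat \<Rightarrow> nat \<Rightarrow> (nat \<Rightarrow> real) \<Rightarrow> bool" where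
  "optimal lab v1 v2 i j p \<longleftrightarrow> feasible i j p \<and>
     (\<forall>\<rho>. RBPSR \<rho> \<longrightarrow> (\<forall>p'. feasible i j p' \<longrightarrow> J \<rho> lab v1 v2 i j p \<le> J \<rho> lab v1 v2 i j p'))"

definition const_sol :: "nat \<Rightarrow> nat \<Rightarrow> (nat \<Rightarrow> real) \<Rightarrow> bool" where
  "const_sol i j p \<longleftrightarrow> (\<forall>s\<in>{i..j}. \<forall>t\<in>{i..j}. p s = p t)"

definition cnt :: "(nat \<Rightarrow> label) \<Rightarrow> label \<Rightarrow> nat \<Rightarrow> nat \<Rightarrow> nat" where
  "cnt lab l i j = card {t\<in>{i..j}. lab t = l}"

definition r :: "(nat \<Rightarrow> label) \<Rightarrow> real \<Rightarrow> real \<Rightarrow> nat \<Rightarrow> nat \<Rightarrow> real" where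
  "r lab v1 v2 i j = v1 * real (cnt lab \<theta>\<^sub>1 i j) /
      (v1 * real (cnt lab \<theta>\<^sub>1 i j) + v2 * real (cnt lab \<theta>\<^sub>2 i j))"

end

theory Submission
  imports Defs
begin

text \<open>Every scoring rule is a mixture, under \<open>\<rho>\<close>, of the threshold rules
  given by the Dirac measures at \<open>\<eta> \<in> [0,1)\<close>, and each such Dirac measure is itself
  admissible; so it suffices to compare losses threshold by threshold.  Under the threshold
  \<open>\<eta>\<close> a block of predictions all \<open>\<le> \<eta>\<close> costs \<open>v\<^sub>1 m / \<eta>\<close>, one with all predictions
  \<open>> \<eta>\<close> costs \<open>v\<^sub>2 n / (1 - \<eta>)\<close>, and \<open>r \<le> \<eta>\<close> says exactly that the first cost is the
  smaller one; hence the constant \<open>r\<close> attains the minimum of the two.  A monotone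
  prediction on the pooled block has its first half entirely \<open>\<le> \<eta>\<close> or its second half
  entirely \<open>> \<eta>\<close>, the optimal constant solutions bound the other half from below by its
  minimum, and \<open>r\<^sub>i\<^sub>,\<^sub>k \<ge> r\<^sub>k\<^sub>+\<^sub>1\<^sub>,\<^sub>j\<close> rules out the one bad combination.\<close>

definition point_score :: "real \<Rightarrow> label \<Rightarrow> real \<Rightarrow> ennreal" where
  "point_score \<eta> l q = (case l of
      \<theta>\<^sub>1 \<Rightarrow> einv \<eta> * indicator {q..1} \<eta>
    | \<theta>\<^sub>2 \<Rightarrow> einv (1 - \<eta>) * indicator {0..<q} \<eta>)"

definition point_loss ::
    "real \<Rightarrow> (nat \<Rightarrow> label) \<Rightarrow> real \<Rightarrow> real \<Rightarrow> nat \<Rightarrow> nat \<Rightarrow> (nat \<Rightarrow> real) \<Rightarrow> ennreal" where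
  "point_loss \<eta> lab v1 v2 i j p =
     (\<Sum>t=i..j. ennreal (w v1 v2 (lab t)) * point_score \<eta> (lab t) (p t))"

text \<open>The threshold-\<open>\<eta>\<close> loss of a block whose predictions are all \<open>\<le> \<eta>\<close>, resp. all \<open>> \<eta>\<close>.\<close>

definition loss_le :: "real \<Rightarrow> (nat \<Rightarrow> label) \<Rightarrow> real \<Rightarrow> nat \<Rightarrow> nat \<Rightarrow> ennreal" where
  "loss_le \<eta> lab v1 i j = of_nat (cnt lab \<theta>\<^sub>1 i j) * (ennreal v1 * einv \<eta>)"

definition loss_gt :: "real \<Rightarrow> (nat \<Rightarrow> label) \<Rightarrow> real \<Rightarrow> nat \<Rightarrow> nat \<Rightarrow> ennreal" where
  "loss_gt \<eta> lab v2 i j = of_nat (cnt lab \<theta>\<^sub>2 i j) * (ennreal v2 * einv (1 - \<eta>))"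

lemma einv_measurable [measurable]: "einv \<in> borel_measurable borel"
  unfolding einv_def by measurable

lemma point_score_measurable [measurable]: "(\<lambda>\<eta>. point_score \<eta> l q) \<in> borel_measurable borel"
  unfolding point_score_def by (cases l) auto

lemma C_eq_nn_integral_point_score: "C \<rho> l q = (\<integral>\<^sup>+\<eta>. point_score \<eta> l q \<partial>\<rho>)"
  unfolding C_def point_score_def by (cases l) auto

lemma J_eq_nn_integral_point_loss:
  assumes "sets \<rho> = sets borel"
  shows "J \<rho> lab v1 v2 i j p = (\<integral>\<^sup>+\<eta>. point_loss \<eta> lab v1 v2 i j p \<partial>\<rho>)"
proof -
  have "(\<lambda>\<eta>. point_score \<eta> l q) \<in> borel_measurable \<rho>"
       "(\<lambda>\<eta>. c * point_score \<eta> l q) \<in> borel_measurable \<rho>" for c l q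
    by (subst measurable_cong_sets[OF assms refl], measurable)+
  then show ?thesis
    unfolding J_def point_loss_def C_eq_nn_integral_point_score
    by (subst nn_integral_sum) (auto simp: nn_integral_cmult)
qed

lemma J_return: "J (return borel \<eta>) lab v1 v2 i j p = point_loss \<eta> lab v1 v2 i j p"
  unfolding J_def point_loss_def C_eq_nn_integral_point_score
  by (simp add: nn_integral_return)

lemma RBPSR_return:
  assumes "0 \<le> \<eta>" "\<eta> < 1"
  shows "RBPSR (return borel \<eta>)"
proof -
  have "prob_space (return borel \<eta>)" by (rule prob_space_return) simp
  moreover have "point_score \<eta> l q < \<top>" if "l = \<theta>\<^sub>1 \<and> 0 < q \<or> l = \<theta>\<^sub>2 \<and> q < 1" for l q
    using assms that by (auto simp: point_score_def einv_def indicator_def)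
  ultimately show ?thesis
    using assms
    by (simp add: RBPSR_def C_eq_nn_integral_point_score nn_integral_return)
qed

lemma optimal_point_loss_le:
  assumes "optimal lab v1 v2 i j p" "feasible i j q" "0 \<le> \<eta>" "\<eta> < 1"
  shows "point_loss \<eta> lab v1 v2 i j p \<le> point_loss \<eta> lab v1 v2 i j q"
  using assms RBPSR_return[of \<eta>] unfolding optimal_def J_return[symmetric] by blast

lemma point_loss_indep_outside:
  assumes "\<not> (0 \<le> \<eta> \<and> \<eta> < 1)" "feasible i j p" "feasible i j q"
  shows "point_loss \<eta> lab v1 v2 i j p = point_loss \<eta> lab v1 v2 i j q"
proof -
  have "point_score \<eta> l (p t) = point_score \<eta> l (q t)" if "t \<in> {i..j}" for l t
  proof -
    have "0 \<le> p t" "p t \<le> 1" "0 \<le> q t" "q t \<le> 1"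
      using assms(2,3) that unfolding feasible_def by auto
    then show ?thesis using assms(1) by (cases l) (auto simp: point_score_def indicator_def)
  qed
  then show ?thesis unfolding point_loss_def by (intro sum.cong) auto
qed

lemma point_loss_split:
  assumes "i \<le> k" "k < j"
  shows "point_loss \<eta> lab v1 v2 i j p =
         point_loss \<eta> lab v1 v2 i k p + point_loss \<eta> lab v1 v2 (k+1) j p"
proof -
  have "{i..j} = {i..k} \<union> {k+1..j}" using assms by auto
  then show ?thesis unfolding point_loss_def by (simp add: sum.union_disjoint)
qed

lemma cnt_split:
  assumes "i \<le> k" "k < j"
  shows "cnt lab l i j = cnt lab l i k + cnt lab l (k+1) j"
proof -
  have "{t\<in>{i..j}. lab t = l} = {t\<in>{i..k}. lab t = l} \<union> {t\<in>{k+1..j}. lab t = l}"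
    using assms by auto
  moreover have "card ({t\<in>{i..k}. lab t = l} \<union> {t\<in>{k+1..j}. lab t = l}) =
                 card {t\<in>{i..k}. lab t = l} + card {t\<in>{k+1..j}. lab t = l}"
    by (rule card_Un_disjoint) auto
  ultimately show ?thesis unfolding cnt_def by simp
qed

lemma loss_le_split:
  "i \<le> k \<Longrightarrow> k < j \<Longrightarrow> loss_le \<eta> lab v1 i j = loss_le \<eta> lab v1 i k + loss_le \<eta> lab v1 (k+1) j"
  unfolding loss_le_def by (simp add: cnt_split distrib_right)

lemma loss_gt_split:
  "i \<le> k \<Longrightarrow> k < j \<Longrightarrow> loss_gt \<eta> lab v2 i j = loss_gt \<eta> lab v2 i k + loss_gt \<eta> lab v2 (k+1) j"
  unfolding loss_gt_def by (simp add: cnt_split distrib_right)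

lemma point_loss_eq_loss_le:
  assumes "0 \<le> \<eta>" "\<eta> < 1" "\<forall>t\<in>{i..j}. p t \<le> \<eta>"
  shows "point_loss \<eta> lab v1 v2 i j p = loss_le \<eta> lab v1 i j"
proof -
  have "point_loss \<eta> lab v1 v2 i j p = (\<Sum>t\<in>{t\<in>{i..j}. lab t = \<theta>\<^sub>1}. ennreal v1 * einv \<eta>)"
    unfolding point_loss_def sum.inter_filter[OF finite_atLeastAtMost]
  proof (intro sum.cong refl)
    fix t assume "t \<in> {i..j}"
    then have "p t \<le> \<eta>" using assms(3) by blast
    then show "ennreal (w v1 v2 (lab t)) * point_score \<eta> (lab t) (p t) =
               (if lab t = \<theta>\<^sub>1 then ennreal v1 * einv \<eta> else 0)"
      using assms(1,2) by (cases "lab t") (auto simp: w_def point_score_def)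
  qed
  then show ?thesis unfolding loss_le_def cnt_def by simp
qed

lemma point_loss_eq_loss_gt:
  assumes "0 \<le> \<eta>" "\<eta> < 1" "\<forall>t\<in>{i..j}. p t > \<eta>"
  shows "point_loss \<eta> lab v1 v2 i j p = loss_gt \<eta> lab v2 i j"
proof -
  have "point_loss \<eta> lab v1 v2 i j p = (\<Sum>t\<in>{t\<in>{i..j}. lab t = \<theta>\<^sub>2}. ennreal v2 * einv (1 - \<eta>))"
    unfolding point_loss_def sum.inter_filter[OF finite_atLeastAtMost]
  proof (intro sum.cong refl)
    fix t assume "t \<in> {i..j}"
    then have "p t > \<eta>" using assms(3) by blast
    then show "ennreal (w v1 v2 (lab t)) * point_score \<eta> (lab t) (p t) =
               (if lab t = \<theta>\<^sub>2 then ennreal v2 * einv (1 - \<eta>) else 0)"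
      using assms(1,2) by (cases "lab t") (auto simp: w_def point_score_def)
  qed
  then show ?thesis unfolding loss_gt_def cnt_def by simp
qed

lemma ratio_le_iff_ennreal:
  fixes m n :: nat and v1 v2 \<eta> :: real
  assumes "v1 > 0" "v2 > 0" "0 \<le> \<eta>" "\<eta> < 1"
  shows "v1 * m / (v1 * m + v2 * n) \<le> \<eta> \<longleftrightarrow>
         of_nat m * (ennreal v1 * einv \<eta>) \<le> of_nat n * (ennreal v2 * einv (1 - \<eta>))"
proof -
  have rhs_finite: "of_nat n * (ennreal v2 * einv (1 - \<eta>)) = ennreal (n * v2 / (1 - \<eta>))"
    using assms by (simp add: einv_def ennreal_of_nat_eq_real_of_nat ennreal_mult[symmetric])
  consider "m = 0" | "m > 0" "\<eta> = 0" | "m > 0" "\<eta> > 0" using assms by linarith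
  then show ?thesis
  proof cases
    case 1
    then show ?thesis using assms by simp
  next
    case 2
    then have "of_nat m * (ennreal v1 * einv \<eta>) = \<top>"
      using assms by (simp add: einv_def ennreal_mult_top ennreal_top_mult)
    moreover have "v1 * m / (v1 * m + v2 * n) > 0" using 2 assms by (simp add: add_pos_nonneg)
    ultimately show ?thesis using 2 rhs_finite by (simp add: top_unique)
  next
    case 3
    then have "of_nat m * (ennreal v1 * einv \<eta>) = ennreal (m * v1 / \<eta>)"
      using assms by (simp add: einv_def ennreal_of_nat_eq_real_of_nat ennreal_mult[symmetric])
    moreover have "v1 * m + v2 * n > 0" using 3 assms by (simp add: add_pos_nonneg)
    ultimately show ?thesis
      using 3 assms rhs_finite by (simp add: divide_simps algebra_simps)
  qed
qed

lemma r_le_iff_loss_le_le_loss_gt: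
  "v1 > 0 \<Longrightarrow> v2 > 0 \<Longrightarrow> 0 \<le> \<eta> \<Longrightarrow> \<eta> < 1 \<Longrightarrow>
   r lab v1 v2 i j \<le> \<eta> \<longleftrightarrow> loss_le \<eta> lab v1 i j \<le> loss_gt \<eta> lab v2 i j"
  unfolding r_def loss_le_def loss_gt_def by (rule ratio_le_iff_ennreal)

lemma point_loss_r:
  assumes "v1 > 0" "v2 > 0" "0 \<le> \<eta>" "\<eta> < 1"
  shows "point_loss \<eta> lab v1 v2 i j (\<lambda>_. r lab v1 v2 i j) =
         min (loss_le \<eta> lab v1 i j) (loss_gt \<eta> lab v2 i j)"
  using r_le_iff_loss_le_le_loss_gt[OF assms, of lab i j] assms
  by (cases "r lab v1 v2 i j \<le> \<eta>") (auto simp: point_loss_eq_loss_le point_loss_eq_loss_gt)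

lemma point_loss_const_sol:
  assumes "const_sol i j p" "0 \<le> \<eta>" "\<eta> < 1"
  shows "min (loss_le \<eta> lab v1 i j) (loss_gt \<eta> lab v2 i j) \<le> point_loss \<eta> lab v1 v2 i j p"
proof (cases "\<forall>t\<in>{i..j}. p t \<le> \<eta>")
  case True
  then show ?thesis using assms(2,3) by (simp add: point_loss_eq_loss_le)
next
  case False
  then obtain s where "s \<in> {i..j}" "p s > \<eta>" by (auto simp: not_le)
  then have "\<forall>t\<in>{i..j}. p t > \<eta>" using assms(1) unfolding const_sol_def by metis
  then show ?thesis using assms(2,3) by (simp add: point_loss_eq_loss_gt)
qed

lemma feasible_point_loss_cases:
  assumes p: "feasible i j p" and ikj: "i \<le> k" "k < j" and \<eta>: "0 \<le> \<eta>" "\<eta> < 1"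
  shows "point_loss \<eta> lab v1 v2 i k p = loss_le \<eta> lab v1 i k
       \<or> point_loss \<eta> lab v1 v2 (k+1) j p = loss_gt \<eta> lab v2 (k+1) j"
proof -
  have mono: "p s \<le> p t" if "i \<le> s" "s \<le> t" "t \<le> j" for s t
    using p that unfolding feasible_def by auto
  show ?thesis
  proof (cases "p k \<le> \<eta>")
    case True
    have "\<forall>t\<in>{i..k}. p t \<le> \<eta>"
      using True ikj by (auto intro: order_trans[OF mono])
    then show ?thesis using \<eta> by (simp add: point_loss_eq_loss_le)
  next
    case False
    have "\<forall>t\<in>{k+1..j}. p t > \<eta>"
    proof
      fix t assume "t \<in> {k+1..j}"
      then have "p k \<le> p t" using ikj by (intro mono) auto
      then show "p t > \<eta>" using False by simp
    qed
    then show ?thesis using \<eta> by (simp add: point_loss_eq_loss_gt)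
  qed
qed

lemma min_add_le_add:
  fixes a1 b1 a2 b2 x1 x2 :: "'a::{linorder, ordered_ab_semigroup_add}"
  assumes "min a1 b1 \<le> x1" "min a2 b2 \<le> x2" "x1 = a1 \<or> x2 = b2" "a1 \<le> b1 \<Longrightarrow> a2 \<le> b2"
  shows "min (a1 + a2) (b1 + b2) \<le> x1 + x2"
proof (cases "a2 \<le> b2")
  case True
  then have "a2 \<le> x2" using assms(2) by simp
  show ?thesis
  proof (cases "a1 \<le> x1")
    case True
    with \<open>a2 \<le> x2\<close> show ?thesis by (simp add: add_mono min.coboundedI1)
  next
    case False
    then have "b1 \<le> x1" "x2 = b2" using assms(1,3) by (auto simp: min_le_iff_disj)
    then show ?thesis by (simp add: add_right_mono min.coboundedI2)
  qed
next
  case False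
  then have "b1 \<le> x1" "b2 \<le> x2" using assms by (auto simp: min_def split: if_splits)
  then show ?thesis by (simp add: add_mono min.coboundedI2)
qed

lemma pooled_point_loss_le:
  assumes v: "v1 > 0" "v2 > 0" and ikj: "i \<le> k" "k < j" and \<eta>: "0 \<le> \<eta>" "\<eta> < 1"
    and opt1: "optimal lab v1 v2 i k p1" "const_sol i k p1"
    and opt2: "optimal lab v1 v2 (k+1) j p2" "const_sol (k+1) j p2"
    and r_ge: "r lab v1 v2 (k+1) j \<le> r lab v1 v2 i k"
    and p: "feasible i j p"
  shows "point_loss \<eta> lab v1 v2 i j (\<lambda>_. r lab v1 v2 i j) \<le> point_loss \<eta> lab v1 v2 i j p"
proof -
  have "feasible i k p" "feasible (k+1) j p" using p ikj unfolding feasible_def by auto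
  then have "min (loss_le \<eta> lab v1 i k) (loss_gt \<eta> lab v2 i k) \<le> point_loss \<eta> lab v1 v2 i k p"
       and "min (loss_le \<eta> lab v1 (k+1) j) (loss_gt \<eta> lab v2 (k+1) j) \<le> point_loss \<eta> lab v1 v2 (k+1) j p"
    using opt1 opt2 \<eta> by (meson point_loss_const_sol optimal_point_loss_le order_trans)+
  moreover have "point_loss \<eta> lab v1 v2 i k p = loss_le \<eta> lab v1 i k
               \<or> point_loss \<eta> lab v1 v2 (k+1) j p = loss_gt \<eta> lab v2 (k+1) j"
    using p ikj \<eta> by (rule feasible_point_loss_cases)
  moreover have "loss_le \<eta> lab v1 i k \<le> loss_gt \<eta> lab v2 i k \<Longrightarrow>
                 loss_le \<eta> lab v1 (k+1) j \<le> loss_gt \<eta> lab v2 (k+1) j"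
    using r_ge by (simp add: r_le_iff_loss_le_le_loss_gt[OF v \<eta>, symmetric])
  ultimately have "min (loss_le \<eta> lab v1 i k + loss_le \<eta> lab v1 (k+1) j)
                       (loss_gt \<eta> lab v2 i k + loss_gt \<eta> lab v2 (k+1) j)
                   \<le> point_loss \<eta> lab v1 v2 i k p + point_loss \<eta> lab v1 v2 (k+1) j p"
    by (rule min_add_le_add)
  then show ?thesis
    by (simp only: point_loss_r[OF v \<eta>] point_loss_split[OF ikj, symmetric]
                   loss_le_split[OF ikj] loss_gt_split[OF ikj])
qed

lemma feasible_const_r:
  assumes "v1 > 0" "v2 > 0"
  shows "feasible i j (\<lambda>_. r lab v1 v2 i j)"
proof -
  have "0 \<le> v1 * real (cnt lab \<theta>\<^sub>1 i j)" "0 \<le> v2 * real (cnt lab \<theta>\<^sub>2 i j)"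
    using assms by simp_all
  then have "0 \<le> r lab v1 v2 i j" "r lab v1 v2 i j \<le> 1"
    unfolding r_def by (auto simp: divide_le_eq_1)
  then show ?thesis unfolding feasible_def by simp
qed

theorem theorem4p10:
  fixes lab :: "nat \<Rightarrow> label" and T i k j :: nat and v1 v2 :: real
  assumes "v1 > 0" and "v2 > 0"
    and "1 \<le> i" and "i \<le> k" and "k < j" and "j \<le> T"
    and "\<exists>p. optimal lab v1 v2 i k p \<and> const_sol i k p"
    and "\<exists>p. optimal lab v1 v2 (k+1) j p \<and> const_sol (k+1) j p"
    and "r lab v1 v2 i k \<ge> r lab v1 v2 (k+1) j"
  shows "optimal lab v1 v2 i j (\<lambda>_. r lab v1 v2 i j)"
  unfolding optimal_def
proof (intro conjI allI impI)
  show fr: "feasible i j (\<lambda>_. r lab v1 v2 i j)" using assms(1,2) by (rule feasible_const_r)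
  fix \<rho> p assume "RBPSR \<rho>" and p: "feasible i j p"
  obtain p1 p2 where opt: "optimal lab v1 v2 i k p1" "const_sol i k p1"
      "optimal lab v1 v2 (k+1) j p2" "const_sol (k+1) j p2"
    using assms(7,8) by blast
  have "point_loss \<eta> lab v1 v2 i j (\<lambda>_. r lab v1 v2 i j) \<le> point_loss \<eta> lab v1 v2 i j p" for \<eta>
  proof (cases "0 \<le> \<eta> \<and> \<eta> < 1")
    case True
    then show ?thesis using pooled_point_loss_le[OF assms(1,2,4,5) _ _ opt assms(9) p] by blast
  next
    case False
    then show ?thesis using point_loss_indep_outside[OF False fr p] by simp
  qed
  moreover have "sets \<rho> = sets borel" using \<open>RBPSR \<rho>\<close> unfolding RBPSR_def by blast
  ultimately show "J \<rho> lab v1 v2 i j (\<lambda>_. r lab v1 v2 i j) \<le> J \<rho> lab v1 v2 i j p"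
    by (simp add: J_eq_nn_integral_point_loss nn_integral_mono)
qed

end
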